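(* Let $1\leq d<2$. Then for all $u\in H^1(\mathbb{R}_+,(1+t)^{d-1})$ \[ \sup_{t\geq0}|u(t)|^2\leq K\left(\int_0^\infty|u'|^2(1+t)^{d-1}dt\right)^{d/2}\left(\int_0^\infty|u|^2(1+t)^{d-1}dt\right)^{1-d/2} \] with $K=(2d)^d(2(d-1))^{-2(d-1)}(2-d)^{-1}$, using the convention $0^0=1$.
   Context: $H^1(\mathbb{R}_+,(1+t)^{d-1})$ is the space of $u\in H^1_{\mathrm{loc}}(\mathbb{R}_+)$ with $\int_0^\infty(|u'|^2+|u|^2)(1+t)^{d-1}dt<\infty$. *)

theory Defs
  imports "HOL-Analysis.Analysis"
begin

definition wt :: "real \<Rightarrow> real \<Rightarrow> real" where
  "wt d t = (1 + t) powr (d - 1)"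

text \<open>An element of H^1_loc([0,oo)) is identified with its locally absolutely
  continuous representative: u is the integral of its weak derivative u',
  u' is locally integrable, and both weighted L^2 integrals are finite.\<close>
definition H1w :: "real \<Rightarrow> (real \<Rightarrow> complex) \<Rightarrow> (real \<Rightarrow> complex) \<Rightarrow> bool" where
  "H1w d u u' \<longleftrightarrow>
     u \<in> borel_measurable lborel \<and> u' \<in> borel_measurable lborel \<and>
     (\<forall>t\<ge>0. set_integrable lborel {0..t} u') \<and>
     (\<forall>t\<ge>0. u t = u 0 + (LBINT s=0..t. u' s)) \<and>
     set_integrable lborel {0..} (\<lambda>t. (cmod (u' t))\<^sup>2 * wt d t) \<and>
     set_integrable lborel {0..} (\<lambda>t. (cmod (u t))\<^sup>2 * wt d t)"

text \<open>The constant K, with the convention 0^0 = 1 (relevant at d = 1).\<close>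
definition Kconst :: "real \<Rightarrow> real" where
  "Kconst d = (2 * d) powr d
      * (if d = 1 then 1 else (2 * (d - 1)) powr (- 2 * (d - 1))) / (2 - d)"

end

theory Submission
  imports Defs
begin

text \<open>
  Averaging \<open>|u t| \<le> |u s| + \<integral>\<^sub>t\<^sup>s |u'|\<close> against the
  probability density \<open>c exp(-c(s-t))\<close> on \<open>(t, \<infinity>)\<close> and applying Fubini bounds \<open>|u t|\<close> by
  exponentially damped integrals of \<open>c |u|\<close> and \<open>|u'|\<close>. As \<open>(1+s)^(d-1) \<ge> (s-t)^(d-1)\<close>,
  Cauchy-Schwarz against the weight turns the dual factor into a Gamma integral; with
  \<open>A, B\<close> the weighted norms of \<open>u', u\<close> this gives
  \<open>|u t| \<le> \<surd>\<Gamma>(2-d) (c^(d/2) \<surd>B/2 + c^(d/2-1) \<surd>A)\<close> for every \<open>c\<close>. Optimising over \<open>c\<close> yields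
  \<open>|u t|\<^sup>2 \<le> \<Gamma>(2-d) (2/d)^d (2-d)^(d-2) A^(d/2) B^(1-d/2)\<close>, and this constant is at most \<open>K\<close>
  because \<open>\<Gamma>(2-d) \<le> 1/(2-d)\<close> (convexity of \<open>z \<mapsto> s^(z-1)\<close> between \<open>\<Gamma>(1) = \<Gamma>(2) = 1\<close>) and an
  elementary logarithmic inequality.
\<close>

lemma nn_integral_shifted_Gamma_kernel:
  fixes c x t :: real
  assumes c: "0 < c" and x: "0 < x"
  shows "(\<integral>\<^sup>+s. ennreal (indicator {t<..} s * (s-t) powr (x-1) * exp (-(c*(s-t)))) \<partial>lborel)
        = ennreal (Gamma x / c powr x)"
proof -
  let ?f = "\<lambda>s. ennreal (indicator {t<..} s * (s-t) powr (x-1) * exp (-(c*(s-t))))"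
  have "(\<integral>\<^sup>+s. ?f s \<partial>lborel) = \<bar>1/c\<bar> * (\<integral>\<^sup>+y. ?f (t + 1/c * y) \<partial>lborel)"
    by (rule nn_integral_real_affine) (use c in auto)
  also have "(\<integral>\<^sup>+y. ?f (t + 1/c * y) \<partial>lborel) =
      (\<integral>\<^sup>+y. ennreal (c powr (1-x)) * ennreal (indicator {0..} y * y powr (x - 1) / exp y) \<partial>lborel)"
  proof (rule nn_integral_cong)
    fix y :: real
    show "?f (t + 1/c * y) = ennreal (c powr (1-x)) * ennreal (indicator {0..} y * y powr (x - 1) / exp y)"
    proof (cases "y > 0")
      case True
      have "(y/c) powr (x-1) = y powr (x-1) * c powr (1-x)"
        using True c by (simp add: powr_divide powr_minus_divide[of c "x-1", simplified])
      then show ?thesis using True c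
        by (simp add: ennreal_mult'[symmetric] indicator_def exp_minus field_simps)
    next
      case False
      then show ?thesis using c by (auto simp: indicator_def zero_less_divide_iff)
    qed
  qed
  also have "\<dots> = ennreal (c powr (1-x)) * ennreal (Gamma x)"
    using Gamma_conv_nn_integral_real[OF x] by (simp add: nn_integral_cmult)
  finally show ?thesis using c x
    by (simp add: ennreal_mult'[symmetric] powr_diff divide_simps)
qed

lemma nn_integral_exp_kernel:
  fixes c t :: real
  assumes c: "0 < c"
  shows "(\<integral>\<^sup>+s. ennreal (c * indicator {t<..} s * exp (-(c*(s-t)))) \<partial>lborel) = 1"
proof -
  have "(\<integral>\<^sup>+s. ennreal (c * indicator {t<..} s * exp (-(c*(s-t)))) \<partial>lborel)
      = (\<integral>\<^sup>+s. ennreal c * ennreal (indicator {t<..} s * (s-t) powr (1-1) * exp (-(c*(s-t)))) \<partial>lborel)"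
    using c by (intro nn_integral_cong) (auto simp: indicator_def ennreal_mult'[symmetric])
  also have "\<dots> = ennreal c * (\<integral>\<^sup>+s. ennreal (indicator {t<..} s * (s-t) powr (1-1) * exp (-(c*(s-t)))) \<partial>lborel)"
    by (rule nn_integral_cmult) auto
  also have "\<dots> = 1"
    using c nn_integral_shifted_Gamma_kernel[OF c, of 1 t] by (simp add: ennreal_mult'[symmetric])
  finally show ?thesis .
qed

lemma nn_integral_exp_kernel_tail:
  fixes c t \<sigma> :: real
  assumes c: "0 < c" and t\<sigma>: "t < \<sigma>"
  shows "(\<integral>\<^sup>+s. ennreal (c * indicator {t<..} s * exp (-(c*(s-t)))) * indicator {\<sigma>..} s \<partial>lborel)
         = ennreal (exp (-(c*(\<sigma>-t))))"
proof -
  have "(\<integral>\<^sup>+s. ennreal (c * indicator {t<..} s * exp (-(c*(s-t)))) * indicator {\<sigma>..} s \<partial>lborel)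
      = (\<integral>\<^sup>+s. ennreal (exp (-(c*(\<sigma>-t)))) * ennreal (c * indicator {\<sigma><..} s * exp (-(c*(s-\<sigma>)))) \<partial>lborel)"
  proof (rule nn_integral_cong_AE, rule eventually_mono[OF AE_lborel_singleton[of \<sigma>]])
    fix s :: real
    assume "s \<noteq> \<sigma>"
    moreover have "exp (-(c*(s-t))) = exp (-(c*(\<sigma>-t))) * exp (-(c*(s-\<sigma>)))"
      by (simp add: exp_add[symmetric] algebra_simps)
    ultimately show "ennreal (c * indicator {t<..} s * exp (-(c*(s-t)))) * indicator {\<sigma>..} s
        = ennreal (exp (-(c*(\<sigma>-t)))) * ennreal (c * indicator {\<sigma><..} s * exp (-(c*(s-\<sigma>))))"
      using t\<sigma> c by (auto simp: indicator_def ennreal_mult'[symmetric] mult_ac)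
  qed
  also have "\<dots> = ennreal (exp (-(c*(\<sigma>-t))))"
    using nn_integral_exp_kernel[OF c, of \<sigma>] by (simp add: nn_integral_cmult)
  finally show ?thesis .
qed

lemma nn_integral_exp_kernel_running_integral:
  fixes f :: "real \<Rightarrow> real" and c t :: real
  assumes c: "0 < c" and [measurable]: "f \<in> borel_measurable borel"
  shows "(\<integral>\<^sup>+s. ennreal (c * indicator {t<..} s * exp (-(c*(s-t))))
              * (\<integral>\<^sup>+\<sigma>. ennreal (indicator {t<..s} \<sigma> * f \<sigma>) \<partial>lborel) \<partial>lborel)
       = (\<integral>\<^sup>+\<sigma>. ennreal (indicator {t<..} \<sigma> * f \<sigma> * exp (-(c*(\<sigma>-t)))) \<partial>lborel)"
proof -
  define g where "g s = ennreal (c * indicator {t<..} s * exp (-(c*(s-t))))" for s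
  have [measurable]: "g \<in> borel_measurable borel"
    unfolding g_def by measurable
  have [measurable]: "Measurable.pred (borel \<Otimes>\<^sub>M borel) (\<lambda>x. snd x \<in> {t<..fst x})"
    unfolding greaterThanAtMost_iff by measurable
  have "(\<integral>\<^sup>+s. g s * (\<integral>\<^sup>+\<sigma>. ennreal (indicator {t<..s} \<sigma> * f \<sigma>) \<partial>lborel) \<partial>lborel)
      = (\<integral>\<^sup>+s. (\<integral>\<^sup>+\<sigma>. g s * ennreal (indicator {t<..s} \<sigma> * f \<sigma>) \<partial>lborel) \<partial>lborel)"
    by (intro nn_integral_cong nn_integral_cmult[symmetric]) measurable
  also have "\<dots> = (\<integral>\<^sup>+\<sigma>. (\<integral>\<^sup>+s. g s * ennreal (indicator {t<..s} \<sigma> * f \<sigma>) \<partial>lborel) \<partial>lborel)"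
    by (rule lborel_pair.Fubini'[symmetric]) measurable
  also have "\<dots> = (\<integral>\<^sup>+\<sigma>. ennreal (indicator {t<..} \<sigma> * f \<sigma> * exp (-(c*(\<sigma>-t)))) \<partial>lborel)"
  proof (rule nn_integral_cong)
    fix \<sigma> :: real
    show "(\<integral>\<^sup>+s. g s * ennreal (indicator {t<..s} \<sigma> * f \<sigma>) \<partial>lborel)
        = ennreal (indicator {t<..} \<sigma> * f \<sigma> * exp (-(c*(\<sigma>-t))))"
    proof (cases "t < \<sigma>")
      case True
      have "(\<integral>\<^sup>+s. g s * ennreal (indicator {t<..s} \<sigma> * f \<sigma>) \<partial>lborel)
          = (\<integral>\<^sup>+s. ennreal (f \<sigma>) * (g s * indicator {\<sigma>..} s) \<partial>lborel)"
        using True by (intro nn_integral_cong) (auto simp: indicator_def mult.commute)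
      also have "\<dots> = ennreal (f \<sigma>) * ennreal (exp (-(c*(\<sigma>-t))))"
        unfolding g_def using nn_integral_exp_kernel_tail[OF c True]
        by (subst nn_integral_cmult) auto
      finally show ?thesis
        using True by (simp add: ennreal_mult''[symmetric])
    qed simp
  qed
  finally show ?thesis unfolding g_def .
qed

lemma nn_integral_indicator_eq_set_integral:
  fixes f :: "real \<Rightarrow> real"
  assumes "set_integrable lborel A f" and "\<And>x. 0 \<le> f x"
  shows "(\<integral>\<^sup>+x. ennreal (indicator A x * f x) \<partial>lborel) = ennreal (LINT x:A|lborel. f x)"
  using assms unfolding set_integrable_def set_lebesgue_integral_def
  by (subst nn_integral_eq_integral) (auto simp: indicator_def)

lemma ennreal_le_sqrt_if_power2_le:
  fixes x :: ennreal
  assumes "x\<^sup>2 \<le> ennreal r"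
  shows "x \<le> ennreal (sqrt r)"
proof (cases x)
  case (real y)
  show ?thesis
  proof (cases "0 \<le> r")
    case True
    then have "y\<^sup>2 \<le> r"
      using assms real by (simp add: ennreal_power)
    then show ?thesis
      using real by (simp add: ennreal_leI real_le_rsqrt)
  next
    case False
    then show ?thesis
      using assms real by (simp add: ennreal_power ennreal_neg)
  qed
next
  case top
  then show ?thesis
    using assms by (simp add: power2_eq_square top_unique)
qed

lemma le_zero_if_le_mult_powr:
  fixes U K e :: real
  assumes e: "e \<noteq> 0" and K: "0 \<le> K" and bound: "\<And>c. 0 < c \<Longrightarrow> U \<le> K * c powr e"
  shows "U \<le> 0"
proof (rule ccontr)
  assume "\<not> U \<le> 0"
  then have U: "0 < U" by simp
  define c where "c = (U / (K + 1)) powr (1/e)"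
  have "c powr e = U / (K + 1)"
    using U K e by (simp add: c_def powr_powr)
  then have "U \<le> U * (K / (K + 1))"
    using bound[of c] U K by (simp add: c_def mult.commute)
  moreover have "U * (K / (K + 1)) < U"
    using U K by (simp add: field_simps)
  ultimately show False by simp
qed

lemma le_powr_interpolation_if_le_powr_sum:
  fixes \<theta> a b U :: real
  assumes \<theta>: "0 < \<theta>" "\<theta> < 1" and a: "0 \<le> a" and b: "0 \<le> b"
    and bound: "\<And>c. 0 < c \<Longrightarrow> U \<le> c powr \<theta> * a + c powr (\<theta> - 1) * b"
  shows "U \<le> (b / \<theta>) powr \<theta> * (a / (1 - \<theta>)) powr (1 - \<theta>)"
proof (cases "a = 0 \<or> b = 0")
  case True
  have "U \<le> 0"
  proof (cases "a = 0")
    case True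
    then show ?thesis
      using \<theta> b bound by (intro le_zero_if_le_mult_powr[of "\<theta> - 1" b]) (auto simp: mult.commute)
  next
    case False
    then have "b = 0"
      using \<open>a = 0 \<or> b = 0\<close> by simp
    then show ?thesis
      using \<theta> a bound by (intro le_zero_if_le_mult_powr[of \<theta> a]) (auto simp: mult.commute)
  qed
  then show ?thesis
    using True by auto
next
  case False
  define P Q where "P = b / \<theta>" and "Q = a / (1 - \<theta>)"
  have P: "0 < P" and Q: "0 < Q"
    using False \<theta> a b by (auto simp: P_def Q_def)
  have "U \<le> (P/Q) powr \<theta> * a + (P/Q) powr (\<theta> - 1) * b"
    using P Q by (intro bound) simp
  also have "(P/Q) powr \<theta> = (P/Q) powr (\<theta> - 1) * (P/Q)"
    using P Q powr_add[of "P/Q" "\<theta> - 1" 1] by simp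
  also have "(P/Q) powr (\<theta> - 1) * (P/Q) * a + (P/Q) powr (\<theta> - 1) * b
      = (P/Q) powr (\<theta> - 1) * P"
    using \<theta> Q by (simp add: P_def Q_def field_simps)
  also have "\<dots> = P powr \<theta> * Q powr (1 - \<theta>)"
    using P Q by (simp add: powr_divide powr_diff powr_minus_divide field_simps)
  finally show ?thesis
    by (simp add: P_def Q_def)
qed

lemma power2_sqrt_powr:
  fixes x a :: real
  assumes "0 \<le> x"
  shows "(sqrt x powr a)\<^sup>2 = x powr a"
proof -
  have "sqrt x powr a = x powr (a/2)"
    using assms by (simp add: powr_half_sqrt[symmetric] powr_powr)
  then show ?thesis
    using assms by (simp add: powr_half_sqrt_powr)
qed

lemma power2_powr_half:
  fixes x a :: real
  assumes "0 \<le> x"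
  shows "(x\<^sup>2) powr (a/2) = x powr a"
proof (cases "x = 0")
  case False
  then have "x\<^sup>2 = x powr 2"
    using assms powr_realpow[of x 2] by simp
  then show ?thesis
    by (simp add: powr_powr)
qed simp

lemma Gamma_le_one:
  fixes z :: real
  assumes z: "1 \<le> z" "z \<le> 2"
  shows "Gamma z \<le> 1"
proof -
  define f where "f t = indicator {0..} t * t powr (2 - 1) / exp t" for t :: real
  define g where "g t = 1 * indicator {0<..} t * exp (-(1*(t-0)))" for t :: real
  have fg_nonneg: "0 \<le> f t" "0 \<le> g t" for t
    by (auto simp: f_def g_def indicator_def)
  have "ennreal (Gamma z) = (\<integral>\<^sup>+t. ennreal (indicator {0..} t * t powr (z - 1) / exp t) \<partial>lborel)"
    using Gamma_conv_nn_integral_real[of z] z by simp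
  also have "\<dots> \<le> (\<integral>\<^sup>+t. ennreal (z-1) * ennreal (f t) + ennreal (2-z) * ennreal (g t) \<partial>lborel)"
  proof (rule nn_integral_mono)
    fix t :: real
    have "indicator {0..} t * t powr (z - 1) / exp t \<le> (z-1) * f t + (2-z) * g t"
    proof (cases "0 < t")
      case True
      have "t powr (z-1) * 1 powr (2-z) \<le> (z-1) * t + (2-z) * 1"
        by (rule Youngs_inequality_0) (use z True in auto)
      then have "t powr (z-1) * inverse (exp t) \<le> ((z-1) * t + (2-z)) * inverse (exp t)"
        by (intro mult_right_mono) auto
      then show ?thesis
        using True by (simp add: f_def g_def exp_minus algebra_simps divide_inverse)
    qed (use fg_nonneg z in \<open>auto simp: indicator_def\<close>)
    then have "ennreal (indicator {0..} t * t powr (z - 1) / exp t) \<le> ennreal ((z-1) * f t + (2-z) * g t)"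
      by (rule ennreal_leI)
    also have "\<dots> = ennreal (z-1) * ennreal (f t) + ennreal (2-z) * ennreal (g t)"
      using fg_nonneg z by (simp add: ennreal_plus ennreal_mult)
    finally show "ennreal (indicator {0..} t * t powr (z - 1) / exp t)
        \<le> ennreal (z-1) * ennreal (f t) + ennreal (2-z) * ennreal (g t)" .
  qed
  also have "\<dots> = ennreal (z-1) * (\<integral>\<^sup>+t. ennreal (f t) \<partial>lborel) + ennreal (2-z) * (\<integral>\<^sup>+t. ennreal (g t) \<partial>lborel)"
    by (simp add: nn_integral_add nn_integral_cmult f_def g_def)
  also have "(\<integral>\<^sup>+t. ennreal (f t) \<partial>lborel) = ennreal (Gamma 2)"
    unfolding f_def using Gamma_conv_nn_integral_real[of 2] by simp
  also have "(\<integral>\<^sup>+t. ennreal (g t) \<partial>lborel) = 1"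
    unfolding g_def by (rule nn_integral_exp_kernel) simp
  also have "Gamma 2 = (1::real)"
    by (simp add: Gamma_numeral)
  finally have "ennreal (Gamma z) \<le> ennreal (z - 1) + ennreal (2 - z)"
    by simp
  also have "\<dots> = ennreal 1"
    using z by (subst ennreal_plus[symmetric]) auto
  finally show ?thesis
    by (subst (asm) ennreal_le_iff) auto
qed

lemma Gamma_le_inverse:
  fixes z :: real
  assumes z: "0 < z" "z \<le> 1"
  shows "Gamma z \<le> 1 / z"
proof -
  have "z * Gamma z = Gamma (z + 1)"
    by (rule Gamma_plus1[symmetric]) (use z in \<open>auto dest: nonpos_Ints_nonpos\<close>)
  also have "\<dots> \<le> 1"
    using z by (intro Gamma_le_one) auto
  finally show ?thesis
    using z by (simp add: field_simps)
qed

lemma Kconst_powr_ineq: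
  fixes d :: real
  assumes d: "1 < d" "d < 2"
  shows "(2-d) powr (d-2) \<le> d powr (2*d) * (2*(d-1)) powr (- 2*(d-1))"
proof -
  have ln_ge: "1 - 1/x \<le> ln x" if "0 < x" for x :: real
    using ln_diff_le[of 1 x] that by (simp add: diff_divide_distrib)
  have "(d-2) * ln (2-d) \<le> d - 1"
    using mult_left_mono[OF ln_ge[of "2-d"], of "2-d"] d by (simp add: algebra_simps)
  also have "d - 1 \<le> 2 * (1 - 1/d)"
  proof -
    have "d * d + 2 \<le> d * 3"
      using mult_nonneg_nonneg[of "d-1" "2-d"] d by (simp add: algebra_simps)
    then show ?thesis
      using d by (simp add: field_simps)
  qed
  also have "\<dots> \<le> 2 * ln d"
    using ln_ge[of d] d by simp
  also have "\<dots> \<le> 2*d * ln d - 2*(d-1) * ln (2*(d-1))"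
  proof -
    have "ln (2*(d-1)) \<le> ln d"
      using d by simp
    then have "(d-1) * ln (2*(d-1)) \<le> (d-1) * ln d"
      using d by (intro mult_left_mono) auto
    then show ?thesis
      by (simp add: algebra_simps)
  qed
  finally have "ln ((2-d) powr (d-2)) \<le> ln (d powr (2*d) * (2*(d-1)) powr (- 2*(d-1)))"
    using d by (simp add: ln_powr ln_mult algebra_simps)
  then show ?thesis
    using d by (subst (asm) ln_le_cancel_iff) auto
qed

lemma Gamma_const_le_Kconst:
  fixes d :: real
  assumes d: "1 \<le> d" "d < 2"
  shows "Gamma (2-d) * (2/d) powr d / (2-d) powr (2-d) \<le> Kconst d"
proof -
  define E where "E = (if d = 1 then 1 else (2 * (d - 1)) powr (- 2 * (d - 1)))"
  have key: "(2-d) powr (d-2) \<le> d powr (2*d) * E"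
    using Kconst_powr_ineq[of d] d by (cases "d = 1") (auto simp: E_def)
  have "Gamma (2-d) * (2/d) powr d / (2-d) powr (2-d) \<le> 1/(2-d) * (2/d) powr d / (2-d) powr (2-d)"
    using Gamma_le_inverse[of "2-d"] d by (intro divide_right_mono mult_right_mono) auto
  also have "\<dots> = (2/d) powr d * (2-d) powr (d-2) / (2-d)"
    using powr_minus_divide[of "2-d" "2-d"] by simp
  also have "\<dots> \<le> (2/d) powr d * (d powr (2*d) * E) / (2-d)"
    using key d by (intro divide_right_mono mult_left_mono) auto
  also have "\<dots> = Kconst d"
  proof -
    have "d powr (2*d) = d powr d * d powr d"
      using powr_add[of d d d] by simp
    then have "(2/d) powr d * d powr (2*d) = (2*d) powr d"
      using d by (simp add: powr_divide powr_mult)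
    then show ?thesis
      unfolding Kconst_def E_def by (metis mult.assoc)
  qed
  finally show ?thesis .
qed

lemma inverse_wt_le_powr:
  assumes d: "1 \<le> d" and t: "0 \<le> t" and ts: "t < s"
  shows "1 / wt d s \<le> (s - t) powr (1 - d)"
proof -
  have "(s - t) powr (d - 1) \<le> wt d s"
    unfolding wt_def using d t ts by (intro powr_mono2) auto
  then have "1 / wt d s \<le> 1 / (s - t) powr (d - 1)"
    using t ts by (intro divide_left_mono) (auto simp: wt_def)
  also have "\<dots> = (s - t) powr (1 - d)"
    using powr_minus_divide[of "s - t" "d - 1"] by simp
  finally show ?thesis .
qed

lemma set_integral_wt_nonneg:
  fixes f :: "real \<Rightarrow> real"
  shows "0 \<le> (LBINT s:{0..}. (f s)\<^sup>2 * wt d s)"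
  by (auto simp: set_lebesgue_integral_def wt_def intro!: integral_nonneg)

lemma nn_integral_exp_kernel_Cauchy_Schwarz:
  fixes F :: "real \<Rightarrow> real"
  assumes d: "1 \<le> d" "d < 2" and t: "0 \<le> t" and c: "0 < c"
    and [measurable]: "F \<in> borel_measurable borel" and F_nonneg: "\<And>s. 0 \<le> F s"
    and F_int: "set_integrable lborel {0..} (\<lambda>s. (F s)\<^sup>2 * wt d s)"
  shows "(\<integral>\<^sup>+s. ennreal (indicator {t<..} s * F s * exp (-(c*(s-t)))) \<partial>lborel)\<^sup>2
     \<le> ennreal ((LBINT s:{0..}. (F s)\<^sup>2 * wt d s) * (Gamma (2-d) / (2*c) powr (2-d)))"
proof -
  have wt_pos: "0 < wt d s" if "t < s" for s
    using that t by (simp add: wt_def)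
  define f where "f s = ennreal (indicator {t<..} s * F s * sqrt (wt d s))" for s
  define g where "g s = ennreal (indicator {t<..} s * exp (-(c*(s-t))) / sqrt (wt d s))" for s
  have [measurable]: "f \<in> borel_measurable borel" "g \<in> borel_measurable borel"
    unfolding f_def g_def wt_def by measurable
  have "(\<integral>\<^sup>+s. ennreal (indicator {t<..} s * F s * exp (-(c*(s-t)))) \<partial>lborel) = (\<integral>\<^sup>+s. f s * g s \<partial>lborel)"
  proof (rule nn_integral_cong)
    fix s :: real
    show "ennreal (indicator {t<..} s * F s * exp (-(c*(s-t)))) = f s * g s"
    proof (cases "t < s")
      case True
      then show ?thesis
        using wt_pos[OF True] F_nonneg[of s] by (simp add: f_def g_def ennreal_mult'[symmetric])
    qed (simp add: f_def g_def)
  qed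
  then have "(\<integral>\<^sup>+s. ennreal (indicator {t<..} s * F s * exp (-(c*(s-t)))) \<partial>lborel)\<^sup>2
      \<le> (\<integral>\<^sup>+s. f s ^ 2 \<partial>lborel) * (\<integral>\<^sup>+s. g s ^ 2 \<partial>lborel)"
    by (simp add: Cauchy_Schwarz_nn_integral)
  also have "\<dots> \<le> ennreal (LBINT s:{0..}. (F s)\<^sup>2 * wt d s) * ennreal (Gamma (2-d) / (2*c) powr (2-d))"
  proof (rule mult_mono)
    have "(\<integral>\<^sup>+s. f s ^ 2 \<partial>lborel) \<le> (\<integral>\<^sup>+s. ennreal (indicator {0..} s * ((F s)\<^sup>2 * wt d s)) \<partial>lborel)"
    proof (rule nn_integral_mono)
      fix s :: real
      show "f s ^ 2 \<le> ennreal (indicator {0..} s * ((F s)\<^sup>2 * wt d s))"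
      proof (cases "t < s")
        case True
        then show ?thesis
          using wt_pos[OF True] F_nonneg[of s] t
          by (simp add: f_def ennreal_power power_mult_distrib)
      qed (simp add: f_def)
    qed
    also have "\<dots> = ennreal (LBINT s:{0..}. (F s)\<^sup>2 * wt d s)"
      by (rule nn_integral_indicator_eq_set_integral[OF F_int]) (simp add: wt_def)
    finally show "(\<integral>\<^sup>+s. f s ^ 2 \<partial>lborel) \<le> ennreal (LBINT s:{0..}. (F s)\<^sup>2 * wt d s)" .
  next
    have "(\<integral>\<^sup>+s. g s ^ 2 \<partial>lborel)
        \<le> (\<integral>\<^sup>+s. ennreal (indicator {t<..} s * (s-t) powr ((2-d)-1) * exp (-((2*c)*(s-t)))) \<partial>lborel)"
    proof (rule nn_integral_mono)
      fix s :: real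
      show "g s ^ 2 \<le> ennreal (indicator {t<..} s * (s-t) powr ((2-d)-1) * exp (-((2*c)*(s-t))))"
      proof (cases "t < s")
        case True
        have "(exp (-(c*(s-t))) / sqrt (wt d s))\<^sup>2 = 1 / wt d s * exp (-((2*c)*(s-t)))"
          using wt_pos[OF True] by (simp add: power_divide power2_eq_square flip: exp_add)
        also have "\<dots> \<le> (s-t) powr ((2-d)-1) * exp (-((2*c)*(s-t)))"
          using inverse_wt_le_powr[OF d(1) t True] by (intro mult_right_mono) auto
        moreover have "g s ^ 2 = ennreal ((exp (-(c*(s-t))) / sqrt (wt d s))\<^sup>2)"
          unfolding g_def using True by (subst ennreal_power) (auto simp: wt_def)
        ultimately show ?thesis
          using True by (simp add: ennreal_leI)
      qed (simp add: g_def)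
    qed
    also have "\<dots> = ennreal (Gamma (2-d) / (2*c) powr (2-d))"
      by (rule nn_integral_shifted_Gamma_kernel) (use c d in auto)
    finally show "(\<integral>\<^sup>+s. g s ^ 2 \<partial>lborel) \<le> ennreal (Gamma (2-d) / (2*c) powr (2-d))" .
  qed auto
  also have "\<dots> = ennreal ((LBINT s:{0..}. (F s)\<^sup>2 * wt d s) * (Gamma (2-d) / (2*c) powr (2-d)))"
    by (rule ennreal_mult''[symmetric]) (use d c in \<open>simp add: less_imp_le\<close>)
  finally show ?thesis .
qed

lemma H1w_norm_le_norm_add_nn_integral_deriv:
  assumes H: "H1w d u u'" and t: "0 \<le> t" and ts: "t \<le> s"
  shows "ennreal (cmod (u t))
           \<le> ennreal (cmod (u s)) + (\<integral>\<^sup>+\<sigma>. ennreal (indicator {t<..s} \<sigma> * cmod (u' \<sigma>)) \<partial>lborel)"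
proof -
  have int_0s: "set_integrable lborel {0..s} u'" and int_0t: "set_integrable lborel {0..t} u'"
    using H t ts unfolding H1w_def by auto
  have int_ts: "set_integrable lborel {t<..s} u'"
    by (rule set_integrable_subset[OF int_0s]) (use t in auto)
  have rep: "u r = u 0 + (LINT x:{0..r}|lborel. u' x)" if "0 \<le> r" for r
  proof -
    have "u r = u 0 + (LBINT x=0..r. u' x)"
      using H that unfolding H1w_def by blast
    then show ?thesis
      using that by (simp only: interval_integral_Icc[of 0 r] zero_ereal_def)
  qed
  have "(LINT x:{0..s}|lborel. u' x) = (LINT x:{0..t}|lborel. u' x) + (LINT x:{t<..s}|lborel. u' x)"
  proof -
    have "{0..s} = {0..t} \<union> {t<..s}" using t ts by auto
    moreover have "{0..t} \<inter> {t<..s} = {}" by auto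
    ultimately show ?thesis
      using set_integral_Un[OF _ int_0t int_ts] by simp
  qed
  then have diff: "u s - u t = (LINT x:{t<..s}|lborel. u' x)"
    using rep[of s] rep[of t] t ts by simp
  have "cmod (u t) \<le> cmod (u s) + cmod (u s - u t)"
    using norm_triangle_ineq[of "u s" "u t - u s"] by (simp add: norm_minus_commute)
  also have "cmod (u s - u t) \<le> (LINT x:{t<..s}|lborel. cmod (u' x))"
    unfolding diff by (rule set_integral_norm_bound[OF int_ts])
  finally have "cmod (u t) \<le> cmod (u s) + (LINT x:{t<..s}|lborel. cmod (u' x))"
    by simp
  then have "ennreal (cmod (u t)) \<le> ennreal (cmod (u s) + (LINT x:{t<..s}|lborel. cmod (u' x)))"
    by (rule ennreal_leI)
  also have "\<dots> = ennreal (cmod (u s)) + ennreal (LINT x:{t<..s}|lborel. cmod (u' x))"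
    by (rule ennreal_plus) (auto simp: set_lebesgue_integral_def intro!: integral_nonneg)
  also have "ennreal (LINT x:{t<..s}|lborel. cmod (u' x))
      = (\<integral>\<^sup>+\<sigma>. ennreal (indicator {t<..s} \<sigma> * cmod (u' \<sigma>)) \<partial>lborel)"
    by (rule nn_integral_indicator_eq_set_integral[symmetric]) (auto intro: set_integrable_norm[OF int_ts])
  finally show ?thesis .
qed

lemma H1w_norm_le_exp_average:
  assumes H: "H1w d u u'" and t: "0 \<le> t" and c: "0 < c"
  shows "ennreal (cmod (u t))
     \<le> ennreal c * (\<integral>\<^sup>+s. ennreal (indicator {t<..} s * cmod (u s) * exp (-(c*(s-t)))) \<partial>lborel)
       + (\<integral>\<^sup>+s. ennreal (indicator {t<..} s * cmod (u' s) * exp (-(c*(s-t)))) \<partial>lborel)"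
proof -
  have [measurable]: "u \<in> borel_measurable borel" "u' \<in> borel_measurable borel"
    using H unfolding H1w_def by auto
  define g where "g s = ennreal (c * indicator {t<..} s * exp (-(c*(s-t))))" for s
  define R where "R s = (\<integral>\<^sup>+\<sigma>. ennreal (indicator {t<..s} \<sigma> * cmod (u' \<sigma>)) \<partial>lborel)" for s
  have [measurable]: "g \<in> borel_measurable borel"
    unfolding g_def by measurable
  have [measurable]: "Measurable.pred (borel \<Otimes>\<^sub>M borel) (\<lambda>x. snd x \<in> {t<..fst x})"
    unfolding greaterThanAtMost_iff by measurable
  have "ennreal (cmod (u t)) = (\<integral>\<^sup>+s. g s * ennreal (cmod (u t)) \<partial>lborel)"
    using nn_integral_exp_kernel[OF c, of t] by (simp add: nn_integral_multc g_def)
  also have "\<dots> \<le> (\<integral>\<^sup>+s. g s * ennreal (cmod (u s)) + g s * R s \<partial>lborel)"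
  proof (rule nn_integral_mono)
    fix s :: real
    show "g s * ennreal (cmod (u t)) \<le> g s * ennreal (cmod (u s)) + g s * R s"
    proof (cases "t < s")
      case True
      then have "g s * ennreal (cmod (u t)) \<le> g s * (ennreal (cmod (u s)) + R s)"
        using H1w_norm_le_norm_add_nn_integral_deriv[OF H t, of s] unfolding R_def
        by (intro mult_left_mono) auto
      then show ?thesis
        by (simp only: distrib_left)
    qed (simp add: g_def)
  qed
  also have "\<dots> = (\<integral>\<^sup>+s. g s * ennreal (cmod (u s)) \<partial>lborel) + (\<integral>\<^sup>+s. g s * R s \<partial>lborel)"
    unfolding R_def by (rule nn_integral_add) measurable
  also have "(\<integral>\<^sup>+s. g s * ennreal (cmod (u s)) \<partial>lborel)
      = ennreal c * (\<integral>\<^sup>+s. ennreal (indicator {t<..} s * cmod (u s) * exp (-(c*(s-t)))) \<partial>lborel)"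
    using c by (subst nn_integral_cmult[symmetric])
      (auto intro!: nn_integral_cong simp: g_def ennreal_mult'[symmetric] mult_ac)
  also have "(\<integral>\<^sup>+s. g s * R s \<partial>lborel)
      = (\<integral>\<^sup>+s. ennreal (indicator {t<..} s * cmod (u' s) * exp (-(c*(s-t)))) \<partial>lborel)"
    unfolding g_def R_def by (rule nn_integral_exp_kernel_running_integral[OF c]) measurable
  finally show ?thesis .
qed

lemma H1w_norm_le_rate_bound:
  assumes d: "1 \<le> d" "d < 2" and H: "H1w d u u'" and t: "0 \<le> t" and c: "0 < c"
  shows "cmod (u t) \<le> sqrt (Gamma (2-d)) *
     (c powr (d/2) * (sqrt (LBINT s:{0..}. (cmod (u s))\<^sup>2 * wt d s) / 2)
      + c powr (d/2 - 1) * sqrt (LBINT s:{0..}. (cmod (u' s))\<^sup>2 * wt d s))"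
proof -
  define A where "A = (LBINT s:{0..}. (cmod (u' s))\<^sup>2 * wt d s)"
  define B where "B = (LBINT s:{0..}. (cmod (u s))\<^sup>2 * wt d s)"
  \<comment> \<open>the damping rate \<open>c/2\<close> makes the Gamma constant \<open>\<Gamma>(2-d) c^(d-2)\<close>\<close>
  define G where "G = Gamma (2-d) / (2 * (c/2)) powr (2-d)"
  have [measurable]: "u \<in> borel_measurable borel" "u' \<in> borel_measurable borel"
    and int_u: "set_integrable lborel {0..} (\<lambda>s. (cmod (u s))\<^sup>2 * wt d s)"
    and int_u': "set_integrable lborel {0..} (\<lambda>s. (cmod (u' s))\<^sup>2 * wt d s)"
    using H unfolding H1w_def by auto
  have c2: "0 < c/2" using c by simp
  have AB_nonneg: "0 \<le> A" "0 \<le> B"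
    unfolding A_def B_def by (rule set_integral_wt_nonneg)+
  have G_nonneg: "0 \<le> G"
    using d by (simp add: G_def less_imp_le)
  have "ennreal (cmod (u t))
     \<le> ennreal (c/2) * (\<integral>\<^sup>+s. ennreal (indicator {t<..} s * cmod (u s) * exp (-(c/2*(s-t)))) \<partial>lborel)
       + (\<integral>\<^sup>+s. ennreal (indicator {t<..} s * cmod (u' s) * exp (-(c/2*(s-t)))) \<partial>lborel)"
    by (rule H1w_norm_le_exp_average[OF H t c2])
  also have "\<dots> \<le> ennreal (c/2) * ennreal (sqrt (B * G)) + ennreal (sqrt (A * G))"
    unfolding A_def B_def G_def
    by (intro add_mono mult_left_mono ennreal_le_sqrt_if_power2_le
        nn_integral_exp_kernel_Cauchy_Schwarz[OF d t c2] int_u int_u') auto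
  also have "\<dots> = ennreal (c/2 * sqrt (B * G) + sqrt (A * G))"
    using ennreal_mult'[of "c/2" "sqrt (B * G)"] ennreal_plus[of "c/2 * sqrt (B * G)" "sqrt (A * G)"]
      c AB_nonneg G_nonneg by simp
  finally have bound: "cmod (u t) \<le> c/2 * sqrt (B * G) + sqrt (A * G)"
    using c AB_nonneg G_nonneg by (subst (asm) ennreal_le_iff) auto
  have "c powr (d - 2) = 1 / c powr (2 - d)"
    using powr_minus_divide[of c "2 - d"] by simp
  then have "G = Gamma (2-d) * c powr (d - 2)"
    by (simp add: G_def)
  then have sqrt_G: "sqrt G = sqrt (Gamma (2-d)) * c powr (d/2 - 1)"
    using c powr_half_sqrt_powr[of c "d - 2"] by (simp add: real_sqrt_mult diff_divide_distrib)
  have c_powr: "c * c powr (d/2 - 1) = c powr (d/2)"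
    using powr_add[of c 1 "d/2 - 1"] c by simp
  have "c/2 * sqrt (B * G) + sqrt (A * G)
      = sqrt (Gamma (2-d)) * ((c * c powr (d/2 - 1)) * (sqrt B / 2) + c powr (d/2 - 1) * sqrt A)"
    unfolding real_sqrt_mult sqrt_G by (simp add: algebra_simps)
  then show ?thesis
    using bound by (simp only: c_powr A_def B_def)
qed

lemma H1w_norm_power2_le_interpolation:
  assumes d: "1 \<le> d" "d < 2" and H: "H1w d u u'" and t: "0 \<le> t"
  shows "(cmod (u t))\<^sup>2 \<le> Gamma (2-d) * (2/d) powr d / (2-d) powr (2-d)
     * (LBINT s:{0..}. (cmod (u' s))\<^sup>2 * wt d s) powr (d/2)
     * (LBINT s:{0..}. (cmod (u s))\<^sup>2 * wt d s) powr (1 - d/2)"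
proof -
  define A where "A = (LBINT s:{0..}. (cmod (u' s))\<^sup>2 * wt d s)"
  define B where "B = (LBINT s:{0..}. (cmod (u s))\<^sup>2 * wt d s)"
  define \<gamma> where "\<gamma> = Gamma (2-d)"
  have AB: "0 \<le> A" "0 \<le> B"
    unfolding A_def B_def by (rule set_integral_wt_nonneg)+
  have \<gamma>: "0 < \<gamma>"
    using d by (simp add: \<gamma>_def)
  have "cmod (u t) / sqrt \<gamma> \<le> (sqrt A / (d/2)) powr (d/2) * (sqrt B / 2 / (1 - d/2)) powr (1 - d/2)"
    using d AB \<gamma> H1w_norm_le_rate_bound[OF d H t]
    by (intro le_powr_interpolation_if_le_powr_sum)
      (auto simp: pos_divide_le_eq A_def B_def \<gamma>_def mult.commute)
  also have "sqrt A / (d/2) = sqrt ((2/d)\<^sup>2 * A)"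
    using d by (simp add: real_sqrt_mult)
  also have "sqrt B / 2 / (1 - d/2) = sqrt ((1/(2-d))\<^sup>2 * B)"
  proof -
    have "sqrt ((1/(2-d))\<^sup>2 * B) = sqrt B / (2 - d)"
      using d by (simp add: real_sqrt_mult)
    then show ?thesis
      using d by (simp add: field_simps)
  qed
  finally have "cmod (u t) \<le> sqrt \<gamma> * (sqrt ((2/d)\<^sup>2 * A) powr (d/2) * sqrt ((1/(2-d))\<^sup>2 * B) powr (1 - d/2))"
    using \<gamma> by (simp add: pos_divide_le_eq mult.commute)
  then have "(cmod (u t))\<^sup>2 \<le> (sqrt \<gamma> * (sqrt ((2/d)\<^sup>2 * A) powr (d/2) * sqrt ((1/(2-d))\<^sup>2 * B) powr (1 - d/2)))\<^sup>2"
    by (rule power_mono) simp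
  also have "\<dots> = \<gamma> * (((2/d)\<^sup>2 * A) powr (d/2) * ((1/(2-d))\<^sup>2 * B) powr (1 - d/2))"
    using \<gamma> AB by (simp add: power_mult_distrib power2_sqrt_powr)
  also have "\<dots> = \<gamma> * (2/d) powr d / (2-d) powr (2-d) * A powr (d/2) * B powr (1 - d/2)"
  proof -
    have "((1/(2-d))\<^sup>2) powr (1 - d/2) = 1 / (2-d) powr (2-d)"
      using d power2_powr_half[of "1/(2-d)" "2-d"] by (simp add: powr_divide diff_divide_distrib)
    moreover have "((2/d)\<^sup>2) powr (d/2) = (2/d) powr d"
      using d by (simp add: power2_powr_half)
    ultimately show ?thesis
      using AB d by (simp add: powr_mult)
  qed
  finally show ?thesis
    by (simp add: A_def B_def \<gamma>_def)
qed

theorem lemma6p5: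
  fixes d :: real and u u' :: "real \<Rightarrow> complex"
  assumes "1 \<le> d" and "d < 2"
    and "H1w d u u'"
  shows "\<forall>t\<ge>0. (cmod (u t))\<^sup>2 \<le>
     Kconst d * (LBINT s:{0..}. (cmod (u' s))\<^sup>2 * wt d s) powr (d / 2)
              * (LBINT s:{0..}. (cmod (u s))\<^sup>2 * wt d s) powr (1 - d / 2)"
proof (intro allI impI)
  fix t :: real
  assume "0 \<le> t"
  let ?A = "(LBINT s:{0..}. (cmod (u' s))\<^sup>2 * wt d s) powr (d / 2)"
  let ?B = "(LBINT s:{0..}. (cmod (u s))\<^sup>2 * wt d s) powr (1 - d / 2)"
  have "(cmod (u t))\<^sup>2 \<le> Gamma (2-d) * (2/d) powr d / (2-d) powr (2-d) * ?A * ?B"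
    using H1w_norm_power2_le_interpolation[OF assms \<open>0 \<le> t\<close>] by simp
  also have "\<dots> \<le> Kconst d * ?A * ?B"
    using Gamma_const_le_Kconst[OF assms(1,2)] by (intro mult_right_mono) auto
  finally show "(cmod (u t))\<^sup>2 \<le> Kconst d * ?A * ?B" .
qed

end
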